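(* Let $X,Y$ be mild $E\mathcal M$-simplicial sets. Then $X\boxtimes Y\subset X\times Y$ is a mild $E\mathcal M$-simplicial subset (for the diagonal action on $X\times Y$). Moreover, this construction is a simplicial subfunctor $E\mathcal M\text{-}\mathbf{SSet}^\mu\times E\mathcal M\text{-}\mathbf{SSet}^\mu\to E\mathcal M\text{-}\mathbf{SSet}^\mu$ of the cartesian product functor $E\mathcal M\text{-}\mathbf{SSet}^\mu\times E\mathcal M\text{-}\mathbf{SSet}^\mu\to E\mathcal M\text{-}\mathbf{SSet}$, and it preserves simplicial tensors in each variable, i.e.\ for every simplicial set $K$ the associativity isomorphism $K\times(X\times Y)\cong(K\times X)\times Y$ restricts to an isomorphism $K\times(X\boxtimes Y)\cong(K\times X)\boxtimes Y$, and similarly in the second variable.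
   Context: $\omega=\{1,2,\dots\}$, $\mathcal M$ the monoid of injections $\omega\to\omega$, $\mathcal M_A$ those fixing $A\subset\omega$ pointwise; $A$ co-infinite if $\omega\setminus A$ is infinite. $E\mathcal M$ is the simplicial monoid with $(E\mathcal M)_n=\mathcal M^{1+n}$, pointwise multiplication, structure maps by precomposition. $E\mathcal M\text{-}\mathbf{SSet}$ is the category of simplicial sets with left $E\mathcal M$-action. $x\in X_n$ is $k$-supported on $A$ if $i_k(u).x=x$ for all $u\in\mathcal M_A$ ($i_k$ inclusion of the $(1+k)$-th factor). $X$ is mild if every $x\in X_n$ is, for each $0\le k\le n$, $k$-supported on some co-infinite set; $E\mathcal M\text{-}\mathbf{SSet}^\mu$ is the full subcategory of mild objects. For simplicial sets $K$, $K\times X$ has $E\mathcal M$ acting on $X$ only. The box product $X\boxtimes Y$ of mild $X,Y$ consists in degree $n$ of all $(x,y)\in X_n\times Y_n$ such that for every $0\le k\le n$ there are $A_k,B_k\subset\omega$ with $A_k\cap B_k=\emptyset$ and $A_k\cup B_k$ co-infinite such that $x$ is $k$-supported on $A_k$ and $y$ is $k$-supported on $B_k$. *)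

theory Defs
  imports Main
begin

text \<open>Convention: the countable set omega = {1,2,...} is relabelled as the type nat
  (via n maps to n-1); injections omega to omega are functions nat to nat that are injective.\<close>

text \<open>A simplicial set is given by sets of n-simplices (cells n) together with the
  action of simplicial operators: for a monotone alpha from [m] to [n], smap m n alpha
  sends n-simplices to m-simplices.\<close>

record 'a sset =
  cells :: "nat \<Rightarrow> 'a set"
  smap  :: "nat \<Rightarrow> nat \<Rightarrow> (nat \<Rightarrow> nat) \<Rightarrow> 'a \<Rightarrow> 'a"

definition simp_op :: "nat \<Rightarrow> nat \<Rightarrow> (nat \<Rightarrow> nat) \<Rightarrow> bool" where
  "simp_op m n \<alpha> \<longleftrightarrow> (\<forall>i\<le>m. \<alpha> i \<le> n) \<and> (\<forall>i j. i \<le> j \<longrightarrow> j \<le> m \<longrightarrow> \<alpha> i \<le> \<alpha> j)"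

definition is_sset :: "('a, 'z) sset_scheme \<Rightarrow> bool" where
  "is_sset X \<longleftrightarrow>
     (\<forall>m n \<alpha> x. simp_op m n \<alpha> \<longrightarrow> x \<in> cells X n \<longrightarrow> smap X m n \<alpha> x \<in> cells X m) \<and>
     (\<forall>m n \<alpha> \<beta> x. (\<forall>i\<le>m. \<alpha> i = \<beta> i) \<longrightarrow> x \<in> cells X n \<longrightarrow>
         smap X m n \<alpha> x = smap X m n \<beta> x) \<and>
     (\<forall>n x. x \<in> cells X n \<longrightarrow> smap X n n id x = x) \<and>
     (\<forall>k m n \<alpha> \<beta> x. simp_op k m \<beta> \<longrightarrow> simp_op m n \<alpha> \<longrightarrow> x \<in> cells X n \<longrightarrow>
         smap X k m \<beta> (smap X m n \<alpha> x) = smap X k n (\<alpha> \<circ> \<beta>) x)"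

text \<open>The standard n-simplex: m-simplices are monotone maps [m] to [n]
  (normalised to be 0 outside [m]).\<close>

definition Delta :: "nat \<Rightarrow> (nat \<Rightarrow> nat) sset" where
  "Delta n = \<lparr> cells = (\<lambda>m. {\<alpha>. simp_op m n \<alpha> \<and> (\<forall>i>m. \<alpha> i = 0)}),
               smap = (\<lambda>m' m \<beta> \<alpha>. (\<lambda>i. if i \<le> m' then \<alpha> (\<beta> i) else 0)) \<rparr>"

text \<open>(E M)_n = M^(1+n): an n-simplex of E M is a tuple u with u k (k = 0..n) an injection.
  The action act n u on n-simplices.\<close>

record 'a emsset = "'a sset" +
  act :: "nat \<Rightarrow> (nat \<Rightarrow> nat \<Rightarrow> nat) \<Rightarrow> 'a \<Rightarrow> 'a"

definition emtuple :: "nat \<Rightarrow> (nat \<Rightarrow> nat \<Rightarrow> nat) \<Rightarrow> bool" where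
  "emtuple n u \<longleftrightarrow> (\<forall>k\<le>n. inj (u k))"

definition is_emsset :: "'a emsset \<Rightarrow> bool" where
  "is_emsset X \<longleftrightarrow> is_sset X \<and>
     (\<forall>n u x. emtuple n u \<longrightarrow> x \<in> cells X n \<longrightarrow> act X n u x \<in> cells X n) \<and>
     (\<forall>n x. x \<in> cells X n \<longrightarrow> act X n (\<lambda>k. id) x = x) \<and>
     (\<forall>n u v x. emtuple n u \<longrightarrow> emtuple n v \<longrightarrow> x \<in> cells X n \<longrightarrow>
         act X n u (act X n v x) = act X n (\<lambda>k. u k \<circ> v k) x) \<and>
     (\<forall>n u v x. (\<forall>k\<le>n. u k = v k) \<longrightarrow> x \<in> cells X n \<longrightarrow> act X n u x = act X n v x) \<and>
     (\<forall>m n \<alpha> u x. simp_op m n \<alpha> \<longrightarrow> emtuple n u \<longrightarrow> x \<in> cells X n \<longrightarrow>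
         smap X m n \<alpha> (act X n u x) = act X m (u \<circ> \<alpha>) (smap X m n \<alpha> x))"

definition incl :: "nat \<Rightarrow> (nat \<Rightarrow> nat) \<Rightarrow> nat \<Rightarrow> nat \<Rightarrow> nat" where
  "incl k u = (\<lambda>j. if j = k then u else id)"

definition M_fix :: "nat set \<Rightarrow> (nat \<Rightarrow> nat) set" where
  "M_fix A = {u. inj u \<and> (\<forall>a\<in>A. u a = a)}"

definition supported :: "'a emsset \<Rightarrow> nat \<Rightarrow> nat \<Rightarrow> nat set \<Rightarrow> 'a \<Rightarrow> bool" where
  "supported X n k A x \<longleftrightarrow> (\<forall>u\<in>M_fix A. act X n (incl k u) x = x)"

definition coinfinite :: "nat set \<Rightarrow> bool" where
  "coinfinite A \<longleftrightarrow> infinite (- A)"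

definition mild :: "'a emsset \<Rightarrow> bool" where
  "mild X \<longleftrightarrow> (\<forall>n x. x \<in> cells X n \<longrightarrow> (\<forall>k\<le>n. \<exists>A. coinfinite A \<and> supported X n k A x))"

definition prod_em :: "'a emsset \<Rightarrow> 'b emsset \<Rightarrow> ('a \<times> 'b) emsset" where
  "prod_em X Y = \<lparr> cells = (\<lambda>n. cells X n \<times> cells Y n),
     smap = (\<lambda>m n \<alpha> (x, y). (smap X m n \<alpha> x, smap Y m n \<alpha> y)),
     act = (\<lambda>n u (x, y). (act X n u x, act Y n u y)) \<rparr>"

definition tensor :: "'k sset \<Rightarrow> 'a emsset \<Rightarrow> ('k \<times> 'a) emsset" where
  "tensor K X = \<lparr> cells = (\<lambda>n. cells K n \<times> cells X n),
     smap = (\<lambda>m n \<alpha> (s, x). (smap K m n \<alpha> s, smap X m n \<alpha> x)),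
     act = (\<lambda>n u (s, x). (s, act X n u x)) \<rparr>"

definition box :: "'a emsset \<Rightarrow> 'b emsset \<Rightarrow> ('a \<times> 'b) emsset" where
  "box X Y = \<lparr> cells = (\<lambda>n. {(x, y). x \<in> cells X n \<and> y \<in> cells Y n \<and>
        (\<forall>k\<le>n. \<exists>A B. A \<inter> B = {} \<and> coinfinite (A \<union> B) \<and>
                       supported X n k A x \<and> supported Y n k B y)}),
     smap = smap (prod_em X Y),
     act = act (prod_em X Y) \<rparr>"

definition em_map :: "'a emsset \<Rightarrow> 'b emsset \<Rightarrow> (nat \<Rightarrow> 'a \<Rightarrow> 'b) \<Rightarrow> bool" where
  "em_map X Y f \<longleftrightarrow>
     (\<forall>n x. x \<in> cells X n \<longrightarrow> f n x \<in> cells Y n) \<and>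
     (\<forall>m n \<alpha> x. simp_op m n \<alpha> \<longrightarrow> x \<in> cells X n \<longrightarrow>
         f m (smap X m n \<alpha> x) = smap Y m n \<alpha> (f n x)) \<and>
     (\<forall>n u x. emtuple n u \<longrightarrow> x \<in> cells X n \<longrightarrow> f n (act X n u x) = act Y n u (f n x))"

end

theory Submission
  imports Defs "HOL-Library.Infinite_Set"
begin

(* The action of u on a simplex x that is k-supported on a co-infinite set A depends only on
   the restriction of u_k to A: every injection agreeing with u_k on A factors as t \<circ> s with
   s in M_A, through one bijection t extending u_k restricted to A. Hence u.x is k-supported
   on u_k(A), and the box condition is preserved by the action.
   For a simplicial operator alpha, the simplex alpha^* x is a priori only fixed by M_A acting
   diagonally in all coordinates of the fibre of alpha over alpha(k); a single coordinate is
   separated from the others by first pushing the complement of A into a co-infinite part of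
   itself with such a diagonal element. Maps of E M-simplicial sets preserve supports, and the
   K-coordinate of a simplicial tensor carries no action, which gives functoriality and the
   compatibility with tensors. *)

definition incl_on :: "nat set \<Rightarrow> (nat \<Rightarrow> nat) \<Rightarrow> nat \<Rightarrow> nat \<Rightarrow> nat" where
  "incl_on J u = (\<lambda>j. if j \<in> J then u else id)"

definition disjoint_supports ::
    "'a emsset \<Rightarrow> 'b emsset \<Rightarrow> nat \<Rightarrow> nat \<Rightarrow> 'a \<Rightarrow> 'b \<Rightarrow> bool" where
  "disjoint_supports X Y n k x y \<longleftrightarrow>
     (\<exists>A B. A \<inter> B = {} \<and> coinfinite (A \<union> B) \<and> supported X n k A x \<and> supported Y n k B y)"

lemma emtuple_incl: "inj w \<Longrightarrow> emtuple n (incl k w)"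
  unfolding emtuple_def incl_def by auto

lemma emtuple_incl_on: "inj w \<Longrightarrow> emtuple n (incl_on J w)"
  unfolding emtuple_def incl_on_def by auto

lemma emtuple_upd: "emtuple n u \<Longrightarrow> inj w \<Longrightarrow> emtuple n (u(k := w))"
  unfolding emtuple_def by auto

subsection \<open>Injections fixing a co-infinite set\<close>

lemma M_fix_inj: "w \<in> M_fix A \<Longrightarrow> inj w"
  unfolding M_fix_def by auto

lemma M_fix_fixes: "w \<in> M_fix A \<Longrightarrow> a \<in> A \<Longrightarrow> w a = a"
  unfolding M_fix_def by auto

lemma M_fix_notin: "w \<in> M_fix A \<Longrightarrow> z \<notin> A \<Longrightarrow> w z \<notin> A"
  unfolding M_fix_def by (metis (mono_tags, lifting) injD mem_Collect_eq)

lemma M_fix_comp: "v \<in> M_fix A \<Longrightarrow> w \<in> M_fix A \<Longrightarrow> v \<circ> w \<in> M_fix A"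
  unfolding M_fix_def by (auto intro: inj_compose)

lemma M_fix_Un: "w \<in> M_fix (A \<union> B) \<longleftrightarrow> w \<in> M_fix A \<and> w \<in> M_fix B"
  unfolding M_fix_def by auto

lemma coinfinite_subset: "coinfinite B \<Longrightarrow> A \<subseteq> B \<Longrightarrow> coinfinite A"
  unfolding coinfinite_def by (meson Compl_anti_mono finite_subset)

lemma infinite_compl_image:
  assumes u: "inj u" and C: "infinite (- C)" shows "infinite (- (u ` C))"
proof
  assume "finite (- (u ` C))"
  moreover have "u ` (- C) \<subseteq> - (u ` C)" using u by (auto dest: injD)
  ultimately show False using inj_on_finite[OF inj_on_subset[OF u]] C by blast
qed

lemma coinfinite_image: "inj u \<Longrightarrow> coinfinite C \<Longrightarrow> coinfinite (u ` C)"
  unfolding coinfinite_def by (rule infinite_compl_image)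

lemma bij_extends_inj_on_coinfinite:
  fixes u :: "nat \<Rightarrow> nat"
  assumes A: "coinfinite A" and u: "inj u"
  obtains t where "bij t" "\<And>a. a \<in> A \<Longrightarrow> t a = u a"
proof -
  have S: "infinite (- A)" using A unfolding coinfinite_def .
  have T: "infinite (- (u ` A))" using infinite_compl_image[OF u S] .
  define g where "g = enumerate (- (u ` A)) \<circ> inv_into UNIV (enumerate (- A))"
  have g: "bij_betw g (- A) (- (u ` A))"
    unfolding g_def
    by (rule bij_betw_trans[OF bij_betw_inv_into[OF bij_enumerate[OF S]] bij_enumerate[OF T]])
  define t where "t = (\<lambda>z. if z \<in> A then u z else g z)"
  have "bij_betw t A (u ` A)"
    using u unfolding t_def bij_betw_def inj_on_def by (auto dest: injD)
  moreover have "bij_betw t (- A) (- (u ` A))"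
    using g unfolding t_def by (rule bij_betw_cong[THEN iffD1, rotated]) auto
  ultimately have "bij_betw t (A \<union> - A) (u ` A \<union> - (u ` A))"
    by (rule bij_betw_combine) auto
  then show ?thesis using that unfolding t_def by simp
qed

lemma M_fix_into:
  assumes Z: "infinite Z" and ZA: "Z \<inter> A = {}"
  obtains q where "q \<in> M_fix A" "q ` (- A) \<subseteq> Z"
proof
  let ?q = "\<lambda>z. if z \<in> A then z else enumerate Z z"
  have in_Z: "enumerate Z z \<in> Z" for z using enumerate_in_set[OF Z] .
  have "inj ?q"
  proof (rule injI)
    fix z1 z2 assume "?q z1 = ?q z2"
    then show "z1 = z2"
      using in_Z[of z1] in_Z[of z2] ZA injD[OF inj_enumerate[OF Z], of z1 z2]
      by (auto split: if_splits)
  qed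
  then show "?q \<in> M_fix A" unfolding M_fix_def by simp
  show "?q ` (- A) \<subseteq> Z" using in_Z by auto
qed

lemma M_fix_gap:
  assumes "coinfinite A"
  obtains q where "q \<in> M_fix A" "infinite (- A - q ` (- A))"
proof -
  have "infinite (- A)" using assms unfolding coinfinite_def .
  then obtain Z W where ZW: "Z \<subseteq> - A" "W \<subseteq> - A" "infinite Z" "infinite W" "Z \<inter> W = {}"
    by (rule infinite_split)
  obtain q where q: "q \<in> M_fix A" "q ` (- A) \<subseteq> Z"
    using M_fix_into[OF ZW(3)] ZW(1) by blast
  have "W \<subseteq> - A - q ` (- A)" using ZW q(2) by blast
  with q(1) ZW(4) show ?thesis using that infinite_super by blast
qed

lemma M_fix_gap_comp:
  assumes v: "v \<in> M_fix A" and gap: "infinite (- A - q ` (- A))"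
  shows "infinite (- A - (v \<circ> q) ` (- A))"
proof
  assume "finite (- A - (v \<circ> q) ` (- A))"
  moreover have "v ` (- A - q ` (- A)) \<subseteq> - A - (v \<circ> q) ` (- A)"
    using M_fix_notin[OF v] injD[OF M_fix_inj[OF v]] by auto
  ultimately show False using inj_on_finite[OF inj_on_subset[OF M_fix_inj[OF v]]] gap by blast
qed

subsection \<open>Supports in a single E M-simplicial set\<close>

context
  fixes X :: "'a emsset"
  assumes X: "is_emsset X"
begin

lemma smap_closed: "simp_op m n \<alpha> \<Longrightarrow> x \<in> cells X n \<Longrightarrow> smap X m n \<alpha> x \<in> cells X m"
  using X unfolding is_emsset_def is_sset_def by simp

lemma smap_cong: "(\<forall>i\<le>m. \<alpha> i = \<beta> i) \<Longrightarrow> x \<in> cells X n \<Longrightarrow> smap X m n \<alpha> x = smap X m n \<beta> x"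
  using X unfolding is_emsset_def is_sset_def by simp

lemma smap_id: "x \<in> cells X n \<Longrightarrow> smap X n n id x = x"
  using X unfolding is_emsset_def is_sset_def by simp

lemma smap_comp:
  "simp_op k m \<beta> \<Longrightarrow> simp_op m n \<alpha> \<Longrightarrow> x \<in> cells X n \<Longrightarrow>
     smap X k m \<beta> (smap X m n \<alpha> x) = smap X k n (\<alpha> \<circ> \<beta>) x"
  using X unfolding is_emsset_def is_sset_def by simp

lemma act_closed: "emtuple n u \<Longrightarrow> x \<in> cells X n \<Longrightarrow> act X n u x \<in> cells X n"
  using X unfolding is_emsset_def by simp

lemma act_id: "x \<in> cells X n \<Longrightarrow> act X n (\<lambda>k. id) x = x"
  using X unfolding is_emsset_def by simp

lemma act_comp:
  "emtuple n u \<Longrightarrow> emtuple n v \<Longrightarrow> x \<in> cells X n \<Longrightarrow>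
     act X n u (act X n v x) = act X n (\<lambda>k. u k \<circ> v k) x"
  using X unfolding is_emsset_def by simp

lemma act_cong: "(\<forall>k\<le>n. u k = v k) \<Longrightarrow> x \<in> cells X n \<Longrightarrow> act X n u x = act X n v x"
  using X unfolding is_emsset_def by simp

lemma smap_act:
  "simp_op m n \<alpha> \<Longrightarrow> emtuple n u \<Longrightarrow> x \<in> cells X n \<Longrightarrow>
     smap X m n \<alpha> (act X n u x) = act X m (u \<circ> \<alpha>) (smap X m n \<alpha> x)"
  using X unfolding is_emsset_def by simp

lemma act_stable:
  assumes "emtuple n u" "emtuple n s" "x \<in> cells X n" "act X n s x = x"
  shows "act X n (\<lambda>k. u k \<circ> s k) x = act X n u x"
  using act_comp[OF assms(1-3)] assms(4) by simp

lemma act_restrict: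
  assumes x: "x \<in> cells X n" and A: "coinfinite A" and sup: "supported X n k A x"
    and u: "emtuple n u" and k: "k \<le> n" and w: "inj w" and agree: "\<And>a. a \<in> A \<Longrightarrow> w a = u k a"
  shows "act X n (u(k := w)) x = act X n u x"
proof -
  have uk: "inj (u k)" using u k unfolding emtuple_def by auto
  obtain t where t: "bij t" "\<And>a. a \<in> A \<Longrightarrow> t a = u k a"
    using bij_extends_inj_on_coinfinite[OF A uk] by blast
  have via_t: "act X n (u(k := v)) x = act X n (u(k := t)) x"
    if v: "inj v" "\<And>a. a \<in> A \<Longrightarrow> v a = u k a" for v
  proof -
    define s where "s = inv t \<circ> v"
    have "s a = a" if "a \<in> A" for a
      using v(2)[OF that] t(2)[OF that] inv_f_f[OF bij_is_inj[OF t(1)]] unfolding s_def by (metis comp_apply)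
    then have "s \<in> M_fix A"
      using v(1) bij_is_inj[OF bij_imp_bij_inv[OF t(1)]] unfolding M_fix_def s_def
      by (auto intro: inj_compose)
    then have fixed: "act X n (incl k s) x = x" using sup unfolding supported_def by blast
    have "u(k := v) = (\<lambda>j. (u(k := t)) j \<circ> incl k s j)"
      using surj_f_inv_f[OF bij_is_surj[OF t(1)]] unfolding incl_def s_def by (auto simp: fun_eq_iff)
    then show ?thesis
      using act_stable[OF emtuple_upd[OF u bij_is_inj[OF t(1)]] emtuple_incl x fixed]
        M_fix_inj[OF \<open>s \<in> M_fix A\<close>] by simp
  qed
  have "act X n (u(k := w)) x = act X n (u(k := t)) x" using via_t w agree by blast
  also have "\<dots> = act X n (u(k := u k)) x" using via_t[of "u k"] uk by simp
  finally show ?thesis by simp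
qed

lemma supported_act:
  assumes x: "x \<in> cells X n" and A: "coinfinite A" and sup: "supported X n k A x"
    and u: "emtuple n u" and k: "k \<le> n"
  shows "supported X n k (u k ` A) (act X n u x)"
  unfolding supported_def
proof
  fix v assume v: "v \<in> M_fix (u k ` A)"
  have uk: "inj (u k)" using u k unfolding emtuple_def by auto
  have "(\<lambda>j. incl k v j \<circ> u j) = u(k := v \<circ> u k)"
    by (auto simp: incl_def fun_eq_iff)
  then have "act X n (incl k v) (act X n u x) = act X n (u(k := v \<circ> u k)) x"
    using act_comp[OF emtuple_incl[OF M_fix_inj[OF v]] u x] by simp
  also have "\<dots> = act X n u x"
    using act_restrict[OF x A sup u k] v uk by (auto simp: M_fix_def inj_compose)
  finally show "act X n (incl k v) (act X n u x) = act X n u x" .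
qed

lemma incl_fixed_if_incl_on_fixed:
  assumes y: "y \<in> cells X m"
    and fixed: "\<And>p. p \<in> M_fix A \<Longrightarrow> act X m (incl_on J p) y = y"
    and j: "j \<in> J" and w: "w \<in> M_fix A" and gap: "infinite (- A - w ` (- A))"
  shows "act X m (incl j w) y = y"
proof -
  define Z where "Z = - A - w ` (- A)"
  (* a agrees with w on the image of w and is the identity on A \<union> Z, so incl j a can replace
     incl j w behind the diagonal w and is absorbed by a diagonal q landing in Z *)
  define a where "a = (\<lambda>z. if z \<in> A \<union> Z then z else w z)"
  have wi: "inj w" using M_fix_inj[OF w] .
  have w_out: "w z \<notin> A \<union> Z" if "z \<notin> A \<union> Z" for z
    using that M_fix_notin[OF w] unfolding Z_def by auto
  have ai: "inj a"
  proof (rule injI)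
    fix z1 z2 assume "a z1 = a z2"
    then show "z1 = z2"
      using w_out[of z1] w_out[of z2] injD[OF wi, of z1 z2] unfolding a_def by (auto split: if_splits)
  qed
  have "a (w z) = w (w z)" for z
  proof (cases "z \<in> A")
    case True
    then show ?thesis using M_fix_fixes[OF w] unfolding a_def by simp
  next
    case False
    then have "w z \<notin> A \<union> Z" using M_fix_notin[OF w] unfolding Z_def by auto
    then show ?thesis unfolding a_def by simp
  qed
  then have aw: "a \<circ> w = w \<circ> w" by (simp add: fun_eq_iff)
  obtain q where q: "q \<in> M_fix A" "q ` (- A) \<subseteq> Z"
    using M_fix_into[of Z A] gap unfolding Z_def by blast
  have "q z \<in> A \<union> Z" for z
    using q M_fix_fixes[OF q(1), of z] by (cases "z \<in> A") auto
  then have aq: "a \<circ> q = q" unfolding a_def by (simp add: fun_eq_iff)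
  have "act X m (incl j w) y = act X m (\<lambda>i. incl j w i \<circ> incl_on J w i) y"
    using act_stable[OF emtuple_incl[OF wi] emtuple_incl_on[OF wi] y fixed[OF w]] by simp
  also have "(\<lambda>i. incl j w i \<circ> incl_on J w i) = (\<lambda>i. incl j a i \<circ> incl_on J w i)"
    using j aw unfolding incl_def incl_on_def by (auto simp: fun_eq_iff)
  also have "act X m \<dots> y = act X m (incl j a) y"
    by (rule act_stable[OF emtuple_incl[OF ai] emtuple_incl_on[OF wi] y fixed[OF w]])
  also have "\<dots> = act X m (\<lambda>i. incl j a i \<circ> incl_on J q i) y"
    using act_stable[OF emtuple_incl[OF ai] emtuple_incl_on[OF M_fix_inj[OF q(1)]] y fixed[OF q(1)]]
    by simp
  also have "(\<lambda>i. incl j a i \<circ> incl_on J q i) = incl_on J q"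
    using j aq unfolding incl_def incl_on_def by (auto simp: fun_eq_iff)
  finally show ?thesis using fixed[OF q(1)] by simp
qed

lemma incl_on_fixed_subset:
  assumes y: "y \<in> cells X m"
    and fixed: "\<And>p. p \<in> M_fix A \<Longrightarrow> act X m (incl_on J p) y = y"
    and w: "w \<in> M_fix A" and gap: "infinite (- A - w ` (- A))"
    and "finite F" "F \<subseteq> J"
  shows "act X m (incl_on F w) y = y"
  using \<open>finite F\<close> \<open>F \<subseteq> J\<close>
proof (induction F rule: finite_induct)
  case empty
  then show ?case using act_id[OF y] by (simp add: incl_on_def id_def)
next
  case (insert j F)
  have "incl_on (insert j F) w = (\<lambda>i. incl j w i \<circ> incl_on F w i)"
    using insert(2) unfolding incl_def incl_on_def by (auto simp: fun_eq_iff)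
  then have "act X m (incl_on (insert j F) w) y = act X m (incl j w) y"
    using act_stable[OF emtuple_incl emtuple_incl_on y] insert M_fix_inj[OF w] by simp
  also have "\<dots> = y"
    using incl_fixed_if_incl_on_fixed[OF y fixed _ w gap] insert(4) by simp
  finally show ?case .
qed

lemma supported_if_incl_on_fixed:
  assumes y: "y \<in> cells X m" and A: "coinfinite A"
    and fixed: "\<And>p. p \<in> M_fix A \<Longrightarrow> act X m (incl_on J p) y = y"
    and J: "J \<subseteq> {..m}" and k: "k \<in> J"
  shows "supported X m k A y"
  unfolding supported_def
proof
  fix v assume v: "v \<in> M_fix A"
  obtain q where q: "q \<in> M_fix A" "infinite (- A - q ` (- A))"
    using M_fix_gap[OF A] by blast
  have vq: "v \<circ> q \<in> M_fix A" "infinite (- A - (v \<circ> q) ` (- A))"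
    using M_fix_comp[OF v q(1)] M_fix_gap_comp[OF v q(2)] by auto
  have qi: "inj q" using M_fix_inj[OF q(1)] .
  have "finite J" using finite_subset[OF J] by simp
  then have rest_fixed: "act X m (incl_on (J - {k}) q) y = y"
    by (intro incl_on_fixed_subset[OF y fixed q]) auto
  have "act X m (incl k v) y = act X m (\<lambda>i. incl k v i \<circ> incl_on J q i) y"
    using act_stable[OF emtuple_incl[OF M_fix_inj[OF v]] emtuple_incl_on[OF qi] y fixed[OF q(1)]]
    by simp
  also have "(\<lambda>i. incl k v i \<circ> incl_on J q i) = (\<lambda>i. incl k (v \<circ> q) i \<circ> incl_on (J - {k}) q i)"
    using k unfolding incl_def incl_on_def by (auto simp: fun_eq_iff)
  also have "act X m \<dots> y = act X m (incl k (v \<circ> q)) y"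
    by (rule act_stable[OF emtuple_incl[OF M_fix_inj[OF vq(1)]] emtuple_incl_on[OF qi] y rest_fixed])
  also have "\<dots> = y"
    by (rule incl_fixed_if_incl_on_fixed[OF y fixed k vq])
  finally show "act X m (incl k v) y = y" .
qed

lemma smap_supported:
  assumes x: "x \<in> cells X n" and \<alpha>: "simp_op m n \<alpha>" and k: "k \<le> m"
    and A: "coinfinite A" and sup: "supported X n (\<alpha> k) A x"
  shows "supported X m k A (smap X m n \<alpha> x)"
proof (rule supported_if_incl_on_fixed[OF smap_closed[OF \<alpha> x] A])
  let ?J = "{j. j \<le> m \<and> \<alpha> j = \<alpha> k}"
  show "?J \<subseteq> {..m}" "k \<in> ?J" using k by auto
  fix p assume p: "p \<in> M_fix A"
  have "act X m (incl_on ?J p) (smap X m n \<alpha> x) = act X m (incl (\<alpha> k) p \<circ> \<alpha>) (smap X m n \<alpha> x)"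
    by (rule act_cong[OF _ smap_closed[OF \<alpha> x]]) (auto simp: incl_def incl_on_def)
  also have "\<dots> = smap X m n \<alpha> (act X n (incl (\<alpha> k) p) x)"
    by (rule smap_act[OF \<alpha> emtuple_incl[OF M_fix_inj[OF p]] x, symmetric])
  also have "\<dots> = smap X m n \<alpha> x"
    using sup p unfolding supported_def by simp
  finally show "act X m (incl_on ?J p) (smap X m n \<alpha> x) = smap X m n \<alpha> x" .
qed

end

subsection \<open>The box product\<close>

lemma is_emsset_restrict:
  assumes P: "is_emsset P" and sub: "\<And>n. C n \<subseteq> cells P n"
    and smap_C: "\<And>m n \<alpha> x. simp_op m n \<alpha> \<Longrightarrow> x \<in> C n \<Longrightarrow> smap P m n \<alpha> x \<in> C m"
    and act_C: "\<And>n u x. emtuple n u \<Longrightarrow> x \<in> C n \<Longrightarrow> act P n u x \<in> C n"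
  shows "is_emsset (P\<lparr>cells := C\<rparr>)"
proof -
  have "x \<in> cells P n" if "x \<in> C n" for x n using sub that by blast
  then show ?thesis
    using P smap_C act_C unfolding is_emsset_def is_sset_def by simp
qed

lemma prod_em_is_emsset:
  assumes X: "is_emsset X" and Y: "is_emsset Y"
  shows "is_emsset (prod_em X Y)"
  unfolding is_emsset_def is_sset_def prod_em_def
  by (auto simp: smap_closed[OF X] smap_closed[OF Y] smap_cong[OF X] smap_cong[OF Y]
      smap_id[OF X] smap_id[OF Y] smap_comp[OF X] smap_comp[OF Y] act_closed[OF X] act_closed[OF Y]
      act_id[OF X] act_id[OF Y] act_comp[OF X] act_comp[OF Y] act_cong[OF X] act_cong[OF Y]
      smap_act[OF X] smap_act[OF Y])

lemma box_cells:
  "(x, y) \<in> cells (box X Y) n \<longleftrightarrow>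
     x \<in> cells X n \<and> y \<in> cells Y n \<and> (\<forall>k\<le>n. disjoint_supports X Y n k x y)"
  by (simp add: box_def disjoint_supports_def)

lemma box_eq_restrict: "box X Y = (prod_em X Y)\<lparr>cells := cells (box X Y)\<rparr>"
  by (simp add: box_def prod_em_def)

lemma box_subset_prod_em: "cells (box X Y) n \<subseteq> cells (prod_em X Y) n"
  by (auto simp: box_def prod_em_def)

lemma disjoint_supports_smap:
  assumes X: "is_emsset X" and Y: "is_emsset Y" and x: "x \<in> cells X n" and y: "y \<in> cells Y n"
    and \<alpha>: "simp_op m n \<alpha>" and k: "k \<le> m" and sup: "disjoint_supports X Y n (\<alpha> k) x y"
  shows "disjoint_supports X Y m k (smap X m n \<alpha> x) (smap Y m n \<alpha> y)"
proof -
  obtain A B where AB: "A \<inter> B = {}" "coinfinite (A \<union> B)"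
    "supported X n (\<alpha> k) A x" "supported Y n (\<alpha> k) B y"
    using sup unfolding disjoint_supports_def by blast
  have "coinfinite A" "coinfinite B" using coinfinite_subset[OF AB(2)] by auto
  then show ?thesis
    using AB smap_supported[OF X x \<alpha> k] smap_supported[OF Y y \<alpha> k]
    unfolding disjoint_supports_def by blast
qed

lemma disjoint_supports_act:
  assumes X: "is_emsset X" and Y: "is_emsset Y" and x: "x \<in> cells X n" and y: "y \<in> cells Y n"
    and u: "emtuple n u" and k: "k \<le> n" and sup: "disjoint_supports X Y n k x y"
  shows "disjoint_supports X Y n k (act X n u x) (act Y n u y)"
proof -
  obtain A B where AB: "A \<inter> B = {}" "coinfinite (A \<union> B)"
    "supported X n k A x" "supported Y n k B y"
    using sup unfolding disjoint_supports_def by blast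
  have "coinfinite A" "coinfinite B" using coinfinite_subset[OF AB(2)] by auto
  moreover have uk: "inj (u k)" using u k unfolding emtuple_def by simp
  moreover have "u k ` A \<inter> u k ` B = {}" using AB(1) uk by (auto dest: injD)
  moreover have "coinfinite (u k ` A \<union> u k ` B)"
    using coinfinite_image[OF uk AB(2)] by (simp add: image_Un)
  ultimately show ?thesis
    using supported_act[OF X x _ AB(3) u k] supported_act[OF Y y _ AB(4) u k]
    unfolding disjoint_supports_def by blast
qed

lemma box_is_emsset:
  assumes X: "is_emsset X" and Y: "is_emsset Y"
  shows "is_emsset (box X Y)"
  apply (subst box_eq_restrict)
proof (rule is_emsset_restrict[OF prod_em_is_emsset[OF X Y] box_subset_prod_em])
  fix m n \<alpha> p assume \<alpha>: "simp_op m n \<alpha>" and p: "p \<in> cells (box X Y) n"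
  then show "smap (prod_em X Y) m n \<alpha> p \<in> cells (box X Y) m"
    using smap_closed[OF X \<alpha>] smap_closed[OF Y \<alpha>] disjoint_supports_smap[OF X Y _ _ \<alpha>] \<alpha>
    by (cases p) (auto simp: box_cells prod_em_def simp_op_def)
next
  fix n u p assume u: "emtuple n u" and p: "p \<in> cells (box X Y) n"
  then show "act (prod_em X Y) n u p \<in> cells (box X Y) n"
    using act_closed[OF X u] act_closed[OF Y u] disjoint_supports_act[OF X Y _ _ u]
    by (cases p) (auto simp: box_cells prod_em_def)
qed

lemma box_mild: "mild (box X Y)"
  unfolding mild_def
proof (intro allI impI)
  fix n k p assume p: "p \<in> cells (box X Y) n" and k: "k \<le> n"
  obtain x y where p_eq: "p = (x, y)" by (cases p)
  obtain A B where AB: "coinfinite (A \<union> B)" "supported X n k A x" "supported Y n k B y"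
    using p k unfolding p_eq box_cells disjoint_supports_def by blast
  then have "supported (box X Y) n k (A \<union> B) (x, y)"
    by (simp add: supported_def box_def prod_em_def M_fix_Un)
  with AB(1) show "\<exists>C. coinfinite C \<and> supported (box X Y) n k C p" using p_eq by blast
qed

subsection \<open>Functoriality and simplicial tensors\<close>

lemma supported_em_map:
  assumes f: "em_map X X' f" and x: "x \<in> cells X n" and sup: "supported X n k A x"
  shows "supported X' n k A (f n x)"
  unfolding supported_def
proof
  fix u assume u: "u \<in> M_fix A"
  have "act X' n (incl k u) (f n x) = f n (act X n (incl k u) x)"
    using f x emtuple_incl[OF M_fix_inj[OF u]] unfolding em_map_def by simp
  also have "\<dots> = f n x" using sup u unfolding supported_def by simp
  finally show "act X' n (incl k u) (f n x) = f n x" .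
qed

lemma box_em_map:
  assumes f: "em_map X X' f" and g: "em_map Y Y' g" and xy: "(x, y) \<in> cells (box X Y) n"
  shows "(f n x, g n y) \<in> cells (box X' Y') n"
proof -
  have x: "x \<in> cells X n" and y: "y \<in> cells Y n" using xy by (auto simp: box_cells)
  then have "f n x \<in> cells X' n" "g n y \<in> cells Y' n" using f g unfolding em_map_def by auto
  then show ?thesis
    using xy supported_em_map[OF f x] supported_em_map[OF g y]
    unfolding box_cells disjoint_supports_def by meson
qed

lemma tensor_cells [simp]: "(s, x) \<in> cells (tensor K X) n \<longleftrightarrow> s \<in> cells K n \<and> x \<in> cells X n"
  by (simp add: tensor_def)

lemma supported_tensor [simp]: "supported (tensor K X) n k A (s, x) \<longleftrightarrow> supported X n k A x"
  by (simp add: supported_def tensor_def)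

lemma mild_tensor: "mild X \<Longrightarrow> mild (tensor K X)"
  unfolding mild_def by (auto simp: tensor_def supported_def)

lemma box_tensor_left_cells:
  "((s, x), y) \<in> cells (box (tensor K X) Y) n \<longleftrightarrow> (s, (x, y)) \<in> cells (tensor K (box X Y)) n"
  by (auto simp: box_cells disjoint_supports_def)

lemma box_tensor_right_cells:
  "(x, (s, y)) \<in> cells (box X (tensor K Y)) n \<longleftrightarrow> (s, (x, y)) \<in> cells (tensor K (box X Y)) n"
  by (auto simp: box_cells disjoint_supports_def)

lemma box_tensor_diag_cells:
  "((s, x), (s, y)) \<in> cells (box (tensor K X) (tensor K Y)) n \<longleftrightarrow>
     (s, (x, y)) \<in> cells (tensor K (box X Y)) n"
  by (auto simp: box_cells disjoint_supports_def)

lemma tensor_box_em_map: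
  assumes "em_map (tensor K X) X' f" "em_map (tensor K Y) Y' g"
    and "(s, (x, y)) \<in> cells (tensor K (box X Y)) n"
  shows "(f n (s, x), g n (s, y)) \<in> cells (box X' Y') n"
  by (rule box_em_map[OF assms(1,2)], unfold box_tensor_diag_cells, rule assms(3))

lemma bij_betw_tensor_box_left:
  "bij_betw (\<lambda>(s, (x, y)). ((s, x), y)) (cells (tensor K (box X Y)) n) (cells (box (tensor K X) Y) n)"
  by (rule bij_betw_byWitness[where f' = "\<lambda>((s, x), y). (s, (x, y))"]) (auto simp: box_tensor_left_cells)

lemma bij_betw_tensor_box_right:
  "bij_betw (\<lambda>(s, (x, y)). (x, (s, y))) (cells (tensor K (box X Y)) n) (cells (box X (tensor K Y)) n)"
  by (rule bij_betw_byWitness[where f' = "\<lambda>(x, (s, y)). (s, (x, y))"]) (auto simp: box_tensor_right_cells)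


theorem proposition2p17:
  fixes X :: "'a emsset" and Y :: "'b emsset"
  assumes "is_emsset X" and "is_emsset Y" and "mild X" and "mild Y"
  shows
    \<comment> \<open>X box Y is a mild E M-simplicial subset of X x Y\<close>
    "(\<forall>n. cells (box X Y) n \<subseteq> cells (prod_em X Y) n)
     \<and> is_emsset (box X Y) \<and> mild (box X Y)
     \<comment> \<open>functoriality in E M-maps between mild objects\<close>
     \<and> (\<forall>(X' :: 'c emsset) (Y' :: 'd emsset) f g.
          is_emsset X' \<longrightarrow> is_emsset Y' \<longrightarrow> mild X' \<longrightarrow> mild Y' \<longrightarrow>
          em_map X X' f \<longrightarrow> em_map Y Y' g \<longrightarrow>
          (\<forall>n x y. (x, y) \<in> cells (box X Y) n \<longrightarrow> (f n x, g n y) \<in> cells (box X' Y') n))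
     \<comment> \<open>simplicial functoriality: n-simplices of mapping spaces, i.e. E M-maps out of Delta p x (-)\<close>
     \<and> (\<forall>p (X' :: 'c emsset) (Y' :: 'd emsset) f g.
          is_emsset X' \<longrightarrow> is_emsset Y' \<longrightarrow> mild X' \<longrightarrow> mild Y' \<longrightarrow>
          em_map (tensor (Delta p) X) X' f \<longrightarrow> em_map (tensor (Delta p) Y) Y' g \<longrightarrow>
          (\<forall>n a x y. (a, (x, y)) \<in> cells (tensor (Delta p) (box X Y)) n \<longrightarrow>
              (f n (a, x), g n (a, y)) \<in> cells (box X' Y') n))
     \<comment> \<open>preservation of simplicial tensors in each variable\<close>
     \<and> (\<forall>K :: 'k sset. is_sset K \<longrightarrow>
          mild (tensor K X) \<and> mild (tensor K Y) \<and>
          (\<forall>n. bij_betw (\<lambda>(s, (x, y)). ((s, x), y))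
                 (cells (tensor K (box X Y)) n) (cells (box (tensor K X) Y) n)) \<and>
          (\<forall>n. bij_betw (\<lambda>(s, (x, y)). (x, (s, y)))
                 (cells (tensor K (box X Y)) n) (cells (box X (tensor K Y)) n)))"
proof (intro conjI allI impI)
  show "cells (box X Y) n \<subseteq> cells (prod_em X Y) n" for n by (rule box_subset_prod_em)
  show "is_emsset (box X Y)" using box_is_emsset[OF assms(1,2)] .
  show "mild (box X Y)" by (rule box_mild)
next
  fix X' :: "'c emsset" and Y' :: "'d emsset" and f g n x y
  assume "em_map X X' f" "em_map Y Y' g" "(x, y) \<in> cells (box X Y) n"
  then show "(f n x, g n y) \<in> cells (box X' Y') n" by (rule box_em_map)
next
  fix p and X' :: "'c emsset" and Y' :: "'d emsset" and f g n a x y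
  assume "em_map (tensor (Delta p) X) X' f" "em_map (tensor (Delta p) Y) Y' g"
    "(a, (x, y)) \<in> cells (tensor (Delta p) (box X Y)) n"
  then show "(f n (a, x), g n (a, y)) \<in> cells (box X' Y') n" by (rule tensor_box_em_map)
next
  fix K :: "'k sset"
  show "mild (tensor K X)" "mild (tensor K Y)" using mild_tensor assms(3,4) by blast+
  show "bij_betw (\<lambda>(s, (x, y)). ((s, x), y)) (cells (tensor K (box X Y)) n)
      (cells (box (tensor K X) Y) n)" for n
    by (rule bij_betw_tensor_box_left)
  show "bij_betw (\<lambda>(s, (x, y)). (x, (s, y))) (cells (tensor K (box X Y)) n)
      (cells (box X (tensor K Y)) n)" for n
    by (rule bij_betw_tensor_box_right)
qed

end
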